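(* Let $K>0$ and $V(x)=Ke^{2ix}$. Then for every $x\in(0,\pi)$, every $j\in\mathbb{N}$, $k\in\mathbb{N}_0$ and $m\in\mathbb{N}_0$, we have $\mu_j(x)\ne E_m$ and $\nu_k(x)\ne E_m$.
   Context: For $x_0\in\mathbb{R}$, let $c(\lambda,x_0,\cdot)$, $s(\lambda,x_0,\cdot)$ be the solutions of $-\psi''(x)+Ke^{2ix}\psi(x)=\lambda\psi(x)$ with $c(\lambda,x_0,x_0)=1$, $c'(\lambda,x_0,x_0)=0$, $s(\lambda,x_0,x_0)=0$, $s'(\lambda,x_0,x_0)=1$. The Dirichlet eigenvalues $\mu_j(x_0)$, $j\in\mathbb{N}$, are the zeros of $\lambda\mapsto s(\lambda,x_0,x_0+\pi)$ and the Neumann eigenvalues $\nu_k(x_0)$, $k\in\mathbb{N}_0$, are the zeros of $\lambda\mapsto c'(\lambda,x_0,x_0+\pi)$, each listed with multiplicity in order of non-decreasing modulus. The numbers $E_m$, $m\in\mathbb{N}_0$, are the zeros of $\Delta(\lambda)^2-1$ with $\Delta$ the Floquet discriminant; for this potential $\Delta(\lambda)=\cos(\pi\sqrt\lambda)$, so $E_0=0$ and $E_{2m-1}=E_{2m}=m^2$, $m\in\mathbb{N}$. *)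

theory Defs
  imports "HOL-Analysis.Analysis"
begin

definition pot :: "real \<Rightarrow> real \<Rightarrow> complex" where
  "pot K x = complex_of_real K * exp (2 * \<i> * complex_of_real x)"

definition is_sol :: "real \<Rightarrow> complex \<Rightarrow> (real \<Rightarrow> complex) \<Rightarrow> bool" where
  "is_sol K lam psi \<longleftrightarrow>
     (\<exists>psi'. \<forall>t. (psi has_vector_derivative psi' t) (at t) \<and>
                 (psi' has_vector_derivative ((pot K t - lam) * psi t)) (at t))"

definition csol :: "real \<Rightarrow> complex \<Rightarrow> real \<Rightarrow> real \<Rightarrow> complex" where
  "csol K lam x0 = (THE psi. is_sol K lam psi \<and> psi x0 = 1 \<and>
                      vector_derivative psi (at x0) = 0)"

definition ssol :: "real \<Rightarrow> complex \<Rightarrow> real \<Rightarrow> real \<Rightarrow> complex" where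
  "ssol K lam x0 = (THE psi. is_sol K lam psi \<and> psi x0 = 0 \<and>
                      vector_derivative psi (at x0) = 1)"

definition dirichlet_ev :: "real \<Rightarrow> real \<Rightarrow> complex \<Rightarrow> bool" where
  "dirichlet_ev K x0 lam \<longleftrightarrow> ssol K lam x0 (x0 + pi) = 0"

definition neumann_ev :: "real \<Rightarrow> real \<Rightarrow> complex \<Rightarrow> bool" where
  "neumann_ev K x0 lam \<longleftrightarrow> vector_derivative (csol K lam x0) (at (x0 + pi)) = 0"

definition floquet_disc :: "real \<Rightarrow> complex \<Rightarrow> complex" where
  "floquet_disc K lam = (csol K lam 0 pi + vector_derivative (ssol K lam 0) (at pi)) / 2"

text \<open>The numbers E_m: zeros of Delta^2 - 1.\<close>
definition periodic_ev :: "real \<Rightarrow> complex \<Rightarrow> bool" where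
  "periodic_ev K lam \<longleftrightarrow> (floquet_disc K lam)^2 - 1 = 0"

end

theory Submission
  imports Defs "HOL-Complex_Analysis.Conformal_Mappings"
begin

text \<open>
  Writing \<open>\<psi>(t) = exp(i\<kappa>t) F(exp(2it))\<close> with \<open>\<kappa>\<^sup>2 = \<lambda>\<close> turns the equation into the Frobenius
  recurrence \<open>4n(n+\<kappa>) F\<^sub>n + K F\<^bsub>n-1\<^esub> = 0\<close>, solved by an entire Bessel-type series as long as
  \<open>n + \<kappa> \<noteq> 0\<close> for all \<open>n \<ge> 1\<close>.  If \<open>\<lambda>\<close> is not the square of an integer, the solutions for
  \<open>\<kappa>\<close> and \<open>-\<kappa>\<close> have distinct Floquet multipliers \<open>exp(\<plusminus>i\<kappa>\<pi>)\<close> with product 1, so their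
  mean \<open>\<Delta>(\<lambda>)\<close> is not \<open>\<plusminus>1\<close>; hence every \<open>E\<^sub>m\<close> is a square \<open>m\<^sup>2\<close>.

  At \<open>\<lambda> = m\<^sup>2\<close> the Floquet solution \<open>u\<close> is joined by \<open>v = A t u + exp(-imt) H(exp(2it))\<close> with
  \<open>A \<noteq> 0\<close>, so the monodromy is a nontrivial Jordan block and \<open>s(x+\<pi>)\<close>, \<open>c'(x+\<pi>)\<close> are nonzero
  multiples of \<open>u(x)\<^sup>2\<close>, \<open>u'(x)\<^sup>2\<close>.  Up to nonzero factors \<open>u(x)\<close> and \<open>u'(x)\<close> are \<open>F(w)\<close> and
  \<open>m F(w) + 2w F'(w)\<close> at \<open>w = exp(2ix)\<close>, and Lommel's integral identity shows that neither
  vanishes on the unit circle away from \<open>w = 1\<close>.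
\<close>

section \<open>Entire power series\<close>

definition entire_fps :: "complex fps \<Rightarrow> bool" where
  "entire_fps f \<longleftrightarrow> fps_conv_radius f = \<infinity>"

lemma entire_fps_in_radius: "entire_fps f \<Longrightarrow> ereal (norm z) < fps_conv_radius f"
  by (simp add: entire_fps_def)

lemma entire_fps_add [simp, intro]: "entire_fps f \<Longrightarrow> entire_fps g \<Longrightarrow> entire_fps (f + g)"
  using fps_conv_radius_add[of f g] by (simp add: entire_fps_def)

lemma entire_fps_mult [simp, intro]: "entire_fps f \<Longrightarrow> entire_fps g \<Longrightarrow> entire_fps (f * g)"
  using fps_conv_radius_mult[of f g] by (simp add: entire_fps_def)

lemma entire_fps_const [simp, intro]: "entire_fps (fps_const c)"
  by (simp add: entire_fps_def)

lemma entire_fps_X_power [simp, intro]: "entire_fps (fps_X ^ n)"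
  by (simp add: entire_fps_def)

lemma entire_fps_X [simp, intro]: "entire_fps fps_X"
  by (simp add: entire_fps_def)

lemma entire_fps_deriv [simp, intro]: "entire_fps f \<Longrightarrow> entire_fps (fps_deriv f)"
  using fps_conv_radius_deriv[of f] by (simp add: entire_fps_def)

lemma entire_fps_XD [simp, intro]: "entire_fps f \<Longrightarrow> entire_fps (fps_XD f)"
  by (auto simp: fps_XD_def)

lemma entire_fps_XDp [simp, intro]: "entire_fps f \<Longrightarrow> entire_fps (fps_XDp c f)"
  by (auto simp: fps_XDp_def)

lemma eval_fps_add_entire:
  "entire_fps f \<Longrightarrow> entire_fps g \<Longrightarrow> eval_fps (f + g) z = eval_fps f z + eval_fps g z"
  by (simp add: eval_fps_add entire_fps_in_radius)

lemma eval_fps_diff_entire: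
  "entire_fps f \<Longrightarrow> entire_fps g \<Longrightarrow> eval_fps (f - g) z = eval_fps f z - eval_fps g z"
  by (simp add: eval_fps_diff entire_fps_in_radius)

lemma eval_fps_mult_entire:
  "entire_fps f \<Longrightarrow> entire_fps g \<Longrightarrow> eval_fps (f * g) z = eval_fps f z * eval_fps g z"
  by (simp add: eval_fps_mult entire_fps_in_radius)

lemmas eval_fps_entire_simps = eval_fps_add_entire eval_fps_diff_entire eval_fps_mult_entire

lemma entire_fpsI:
  assumes "\<And>z. summable (\<lambda>n. fps_nth f n * z ^ n)"
  shows "entire_fps f"
  unfolding entire_fps_def fps_conv_radius_def by (rule conv_radius_inftyI'') (rule assms)

section \<open>Bloch functions\<close>

definition bloch_fun :: "complex \<Rightarrow> complex fps \<Rightarrow> real \<Rightarrow> complex" where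
  "bloch_fun \<kappa> f t = exp (\<i> * \<kappa> * t) * eval_fps f (exp (2 * \<i> * t))"

text \<open>Multiplies the \<open>n\<close>-th coefficient by \<open>i(\<kappa> + 2n)\<close>, i.e. differentiates \<open>exp(i(\<kappa> + 2n)t)\<close>.\<close>

definition bloch_deriv :: "complex \<Rightarrow> complex fps \<Rightarrow> complex fps" where
  "bloch_deriv \<kappa> f = fps_const (2 * \<i>) * fps_XDp (\<kappa> / 2) f"

definition frobenius_op :: "real \<Rightarrow> complex \<Rightarrow> complex fps \<Rightarrow> complex fps" where
  "frobenius_op K \<kappa> f = 4 * fps_XD (fps_XDp \<kappa> f) + fps_const (of_real K) * fps_X * f"

lemma frobenius_op_nth:
  "fps_nth (frobenius_op K \<kappa> f) n =
     4 * of_nat n * (of_nat n + \<kappa>) * fps_nth f n + (if n = 0 then 0 else K * fps_nth f (n - 1))"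
  by (simp add: frobenius_op_def numeral_fps_const algebra_simps)

lemma entire_bloch_deriv [simp, intro]: "entire_fps f \<Longrightarrow> entire_fps (bloch_deriv \<kappa> f)"
  by (auto simp: bloch_deriv_def)

lemma entire_frobenius_op [simp, intro]: "entire_fps f \<Longrightarrow> entire_fps (frobenius_op K \<kappa> f)"
  unfolding frobenius_op_def numeral_fps_const by blast

lemma bloch_deriv_twice:
  "bloch_deriv \<kappa> (bloch_deriv \<kappa> f) =
     fps_const (of_real K) * fps_X * f - fps_const (\<kappa>\<^sup>2) * f - frobenius_op K \<kappa> f"
  by (rule fps_ext) (simp add: bloch_deriv_def frobenius_op_nth power2_eq_square algebra_simps)

lemma eval_fps_XDp:
  "entire_fps f \<Longrightarrow> eval_fps (fps_XDp c f) z = z * eval_fps (fps_deriv f) z + c * eval_fps f z"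
  by (simp add: fps_XDp_def fps_XD_def eval_fps_entire_simps)

lemma has_vector_derivative_exp_linear:
  fixes a :: complex
  shows "((\<lambda>t::real. exp (a * t)) has_vector_derivative (a * exp (a * t))) (at t)"
proof -
  have "((\<lambda>z. exp (a * z)) has_field_derivative (a * exp (a * t))) (at (of_real t))"
    by (auto intro!: derivative_eq_intros)
  then show ?thesis by (rule has_vector_derivative_real_field)
qed

lemma has_vector_derivative_bloch_fun:
  assumes "entire_fps f"
  shows "(bloch_fun \<kappa> f has_vector_derivative bloch_fun \<kappa> (bloch_deriv \<kappa> f) t) (at t)"
proof -
  let ?e = "\<lambda>t::real. exp (\<i> * \<kappa> * t)" and ?w = "\<lambda>t::real. exp (2 * \<i> * t)"
  have "((eval_fps f \<circ> ?w) has_vector_derivative 2 * \<i> * ?w t * eval_fps (fps_deriv f) (?w t)) (at t)"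
    using field_vector_diff_chain_at[OF has_vector_derivative_exp_linear[of "2 * \<i>" t]
        has_field_derivative_eval_fps[OF entire_fps_in_radius[OF assms]]]
    by (simp add: mult.assoc)
  then have "((\<lambda>t. ?e t * eval_fps f (?w t)) has_vector_derivative
      ?e t * (2 * \<i> * ?w t * eval_fps (fps_deriv f) (?w t)) + \<i> * \<kappa> * ?e t * eval_fps f (?w t)) (at t)"
    using has_vector_derivative_mult[OF has_vector_derivative_exp_linear[of "\<i> * \<kappa>"]]
    by (simp add: o_def)
  moreover have "eval_fps (bloch_deriv \<kappa> f) (?w t) =
      2 * \<i> * ?w t * eval_fps (fps_deriv f) (?w t) + \<i> * \<kappa> * eval_fps f (?w t)"
    using assms by (simp add: bloch_deriv_def eval_fps_entire_simps eval_fps_XDp algebra_simps)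
  ultimately show ?thesis
    by (simp add: bloch_fun_def[abs_def] algebra_simps)
qed

lemma bloch_fun_bloch_deriv_twice:
  assumes "entire_fps f"
  shows "bloch_fun \<kappa> (bloch_deriv \<kappa> (bloch_deriv \<kappa> f)) t =
    (pot K t - \<kappa>\<^sup>2) * bloch_fun \<kappa> f t - bloch_fun \<kappa> (frobenius_op K \<kappa> f) t"
  using assms unfolding bloch_deriv_twice[of _ _ K]
  by (simp add: bloch_fun_def pot_def eval_fps_entire_simps algebra_simps)

lemma bloch_fun_shift_pi: "bloch_fun \<kappa> f (t + pi) = exp (\<i> * \<kappa> * pi) * bloch_fun \<kappa> f t"
proof -
  have "exp (2 * \<i> * of_real (t + pi)) = exp (2 * \<i> * t) * exp (2 * pi * \<i>)"
    by (simp add: distrib_left exp_add mult_ac)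
  moreover have "exp (\<i> * \<kappa> * of_real (t + pi)) = exp (\<i> * \<kappa> * pi) * exp (\<i> * \<kappa> * t)"
    by (simp add: distrib_left exp_add mult_ac)
  ultimately show ?thesis by (simp add: bloch_fun_def)
qed

lemma bloch_fun_X_power:
  assumes "entire_fps f"
  shows "bloch_fun (- of_nat m) (fps_X ^ m * f) t = bloch_fun (of_nat m) f t"
proof -
  have "exp (- (\<i> * of_nat m * t)) * exp (2 * \<i> * t) ^ m = exp (\<i> * of_nat m * t)"
    by (simp flip: exp_of_nat_mult exp_add) (simp add: algebra_simps)
  then show ?thesis
    using assms by (simp add: bloch_fun_def eval_fps_entire_simps mult.assoc[symmetric])
qed

lemma bloch_fun_const_mult:
  "entire_fps f \<Longrightarrow> bloch_fun \<kappa> (fps_const c * f) t = c * bloch_fun \<kappa> f t"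
  by (simp add: bloch_fun_def eval_fps_entire_simps)

section \<open>Solutions of the equation\<close>

definition sol_with_deriv ::
    "real \<Rightarrow> complex \<Rightarrow> (real \<Rightarrow> complex) \<Rightarrow> (real \<Rightarrow> complex) \<Rightarrow> bool" where
  "sol_with_deriv K lam y y' \<longleftrightarrow> (\<forall>t. (y has_vector_derivative y' t) (at t) \<and>
       (y' has_vector_derivative (pot K t - lam) * y t) (at t))"

lemma vector_derivative_sol_with_deriv:
  "sol_with_deriv K lam y y' \<Longrightarrow> vector_derivative y (at t) = y' t"
  unfolding sol_with_deriv_def by (blast intro: vector_derivative_at)

lemma is_sol_iff_sol_with_deriv:
  "is_sol K lam y \<longleftrightarrow> sol_with_deriv K lam y (\<lambda>t. vector_derivative y (at t))"
proof
  assume "is_sol K lam y"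
  then obtain y' where "sol_with_deriv K lam y y'"
    unfolding is_sol_def sol_with_deriv_def by blast
  then show "sol_with_deriv K lam y (\<lambda>t. vector_derivative y (at t))"
    using vector_derivative_sol_with_deriv by (metis (no_types, lifting) ext)
qed (auto simp: is_sol_def sol_with_deriv_def)

lemma sol_with_deriv_lincomb:
  assumes "sol_with_deriv K lam y y'" "sol_with_deriv K lam z z'"
  shows "sol_with_deriv K lam (\<lambda>t. a * y t + b * z t) (\<lambda>t. a * y' t + b * z' t)"
  unfolding sol_with_deriv_def
proof
  fix t
  have "(y has_vector_derivative y' t) (at t)" "(y' has_vector_derivative (pot K t - lam) * y t) (at t)"
    "(z has_vector_derivative z' t) (at t)" "(z' has_vector_derivative (pot K t - lam) * z t) (at t)"
    using assms unfolding sol_with_deriv_def by auto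
  then have "((\<lambda>t. a * y t + b * z t) has_vector_derivative a * y' t + b * z' t) (at t)"
    "((\<lambda>t. a * y' t + b * z' t) has_vector_derivative
        a * ((pot K t - lam) * y t) + b * ((pot K t - lam) * z t)) (at t)"
    by (auto intro!: has_vector_derivative_add has_vector_derivative_mult_right)
  then show "((\<lambda>t. a * y t + b * z t) has_vector_derivative a * y' t + b * z' t) (at t) \<and>
      ((\<lambda>t. a * y' t + b * z' t) has_vector_derivative (pot K t - lam) * (a * y t + b * z t)) (at t)"
    by (simp add: algebra_simps)
qed

lemma nonneg_deriv_bound_vanishes:
  fixes E E' :: "real \<Rightarrow> real"
  assumes deriv: "\<And>s. (E has_real_derivative E' s) (at s)"
    and bound: "\<And>s. \<bar>E' s\<bar> \<le> C * E s" and nonneg: "\<And>s. 0 \<le> E s" and zero: "E t0 = 0"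
  shows "E t = 0"
proof (cases "t0 \<le> t")
  case True
  have "E t * exp (- C * t) \<le> E t0 * exp (- C * t0)"
  proof (rule DERIV_nonpos_imp_nonincreasing[where f = "\<lambda>s. E s * exp (- C * s)", OF True])
    fix s
    have "((\<lambda>s. E s * exp (- C * s)) has_real_derivative (E' s - C * E s) * exp (- C * s)) (at s)"
      by (auto intro!: derivative_eq_intros deriv simp: algebra_simps)
    moreover have "(E' s - C * E s) * exp (- C * s) \<le> 0"
      using bound[of s] by (intro mult_nonpos_nonneg) auto
    ultimately show "\<exists>y. ((\<lambda>s. E s * exp (- C * s)) has_real_derivative y) (at s) \<and> y \<le> 0"
      by blast
  qed
  then show ?thesis using zero nonneg[of t] by (simp add: mult_le_0_iff)
next
  case False
  have "E t * exp (C * t) \<le> E t0 * exp (C * t0)"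
  proof (rule DERIV_nonneg_imp_nondecreasing[where f = "\<lambda>s. E s * exp (C * s)"])
    fix s
    have "((\<lambda>s. E s * exp (C * s)) has_real_derivative (E' s + C * E s) * exp (C * s)) (at s)"
      by (auto intro!: derivative_eq_intros deriv simp: algebra_simps)
    moreover have "0 \<le> (E' s + C * E s) * exp (C * s)"
      using bound[of s] by (intro mult_nonneg_nonneg) auto
    ultimately show "\<exists>y. ((\<lambda>s. E s * exp (C * s)) has_real_derivative y) (at s) \<and> y \<ge> 0"
      by blast
  qed (use False in auto)
  then show ?thesis using zero nonneg[of t] by (simp add: mult_le_0_iff)
qed

lemma has_real_derivative_norm_power2:
  fixes y :: "real \<Rightarrow> complex"
  assumes "(y has_vector_derivative y') (at s)"
  shows "((\<lambda>s. (norm (y s))\<^sup>2) has_real_derivative 2 * Re (y' * cnj (y s))) (at s)"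
proof -
  have "((\<lambda>s. Re (y s * cnj (y s))) has_vector_derivative Re (y s * cnj y' + y' * cnj (y s))) (at s)"
    by (intro bounded_linear.has_vector_derivative[OF bounded_linear_Re] has_vector_derivative_mult
        has_vector_derivative_cnj assms)
  moreover have "(\<lambda>s. Re (y s * cnj (y s))) = (\<lambda>s. (norm (y s))\<^sup>2)"
    by (simp flip: complex_norm_square)
  moreover have "Re (y s * cnj y' + y' * cnj (y s)) = 2 * Re (y' * cnj (y s))"
    by simp
  ultimately show ?thesis
    by (simp add: has_real_derivative_iff_has_vector_derivative)
qed

lemma sol_with_deriv_zero_data:
  assumes sol: "sol_with_deriv K lam y y'" and "y t0 = 0" and "y' t0 = 0"
  shows "y t = 0"
proof -
  define q where "q s = pot K s - lam" for s
  define L where "L = \<bar>K\<bar> + norm lam"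
  have q_bound: "norm (q s) \<le> L" for s
    using norm_triangle_ineq4[of "pot K s" lam] by (simp add: q_def L_def pot_def norm_mult)
  define E where "E s = (norm (y s))\<^sup>2 + (norm (y' s))\<^sup>2" for s
  define E' where "E' s = 2 * Re (y' s * cnj (y s)) + 2 * Re (q s * y s * cnj (y' s))" for s
  have "(E has_real_derivative E' s) (at s)" for s
    using sol unfolding sol_with_deriv_def E_def[abs_def] E'_def q_def
    by (intro DERIV_add has_real_derivative_norm_power2) auto
  moreover have "\<bar>E' s\<bar> \<le> (1 + L) * E s" for s
  proof -
    let ?a = "norm (y s)" and ?b = "norm (y' s)"
    have "\<bar>E' s\<bar> \<le> 2 * (?b * ?a + norm (q s) * ?a * ?b)"
      unfolding E'_def using abs_Re_le_cmod[of "y' s * cnj (y s)"] abs_Re_le_cmod[of "q s * y s * cnj (y' s)"]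
      by (simp add: norm_mult)
    also have "\<dots> \<le> 2 * ?a * ?b * (1 + L)"
      using q_bound[of s] by (simp add: algebra_simps mult_right_mono)
    also have "\<dots> \<le> (1 + L) * E s"
      using mult_left_mono[OF sum_squares_bound[of ?a ?b], of "1 + L"]
      by (simp add: E_def L_def algebra_simps)
    finally show ?thesis .
  qed
  moreover have "0 \<le> E s" for s
    by (simp add: E_def)
  moreover have "E t0 = 0"
    by (simp add: E_def assms)
  ultimately have "E t = 0"
    by (rule nonneg_deriv_bound_vanishes)
  then show ?thesis
    by (simp add: E_def add_nonneg_eq_0_iff)
qed

lemma sol_with_deriv_unique:
  assumes "sol_with_deriv K lam y y'" "sol_with_deriv K lam z z'" "y x0 = z x0" "y' x0 = z' x0"
  shows "y = z"
proof
  fix t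
  have "sol_with_deriv K lam (\<lambda>t. 1 * y t + (-1) * z t) (\<lambda>t. 1 * y' t + (-1) * z' t)"
    by (rule sol_with_deriv_lincomb[OF assms(1,2)])
  from sol_with_deriv_zero_data[OF this, of x0 t] assms(3,4) show "y t = z t" by simp
qed

lemma csol_eqI:
  assumes "sol_with_deriv K lam y y'" "y x0 = 1" "y' x0 = 0"
  shows "csol K lam x0 = y"
  unfolding csol_def
proof (rule the_equality)
  show "is_sol K lam y \<and> y x0 = 1 \<and> vector_derivative y (at x0) = 0"
    using assms is_sol_iff_sol_with_deriv vector_derivative_sol_with_deriv
    by (metis (no_types, lifting) ext)
qed (use assms is_sol_iff_sol_with_deriv sol_with_deriv_unique in metis)

lemma ssol_eqI:
  assumes "sol_with_deriv K lam y y'" "y x0 = 0" "y' x0 = 1"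
  shows "ssol K lam x0 = y"
  unfolding ssol_def
proof (rule the_equality)
  show "is_sol K lam y \<and> y x0 = 0 \<and> vector_derivative y (at x0) = 1"
    using assms is_sol_iff_sol_with_deriv vector_derivative_sol_with_deriv
    by (metis (no_types, lifting) ext)
qed (use assms is_sol_iff_sol_with_deriv sol_with_deriv_unique in metis)

lemma wronskian_zero_imp_proportional:
  assumes U: "sol_with_deriv K lam u u'" and V: "sol_with_deriv K lam v v'"
    and W: "u x * v' x - u' x * v x = 0" and nz: "u x \<noteq> 0 \<or> u' x \<noteq> 0"
  shows "\<exists>c. \<forall>t. v t = c * u t"
proof -
  define c where "c = (if u x \<noteq> 0 then v x / u x else v' x / u' x)"
  have "v x = c * u x" "v' x = c * u' x"
    using W nz by (auto simp: c_def field_simps)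
  moreover have "sol_with_deriv K lam (\<lambda>t. c * u t + 0 * v t) (\<lambda>t. c * u' t + 0 * v' t)"
    by (rule sol_with_deriv_lincomb[OF U V])
  ultimately have "v = (\<lambda>t. c * u t)"
    using sol_with_deriv_unique[OF V] by simp
  then show ?thesis by auto
qed

context
  fixes K lam u u' v v' x0 W
  assumes U: "sol_with_deriv K lam u u'" and V: "sol_with_deriv K lam v v'"
    and W_def: "W = u x0 * v' x0 - u' x0 * v x0" and W_nz: "W \<noteq> 0"
begin

lemma csol_fundamental_pair:
  "csol K lam x0 = (\<lambda>t. (v' x0 * u t - u' x0 * v t) / W)"
  "vector_derivative (csol K lam x0) (at t) = (v' x0 * u' t - u' x0 * v' t) / W"
proof -
  have S: "sol_with_deriv K lam (\<lambda>t. (v' x0 * u t - u' x0 * v t) / W)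
      (\<lambda>t. (v' x0 * u' t - u' x0 * v' t) / W)"
    using sol_with_deriv_lincomb[OF U V, of "v' x0 / W" "- u' x0 / W"]
    by (simp add: diff_divide_distrib)
  have "v' x0 * u x0 - u' x0 * v x0 = W"
    by (simp add: W_def mult.commute)
  then show "csol K lam x0 = (\<lambda>t. (v' x0 * u t - u' x0 * v t) / W)"
    using W_nz by (intro csol_eqI[OF S]) simp_all
  then show "vector_derivative (csol K lam x0) (at t) = (v' x0 * u' t - u' x0 * v' t) / W"
    using vector_derivative_sol_with_deriv[OF S] by simp
qed

lemma ssol_fundamental_pair:
  "ssol K lam x0 = (\<lambda>t. (u x0 * v t - v x0 * u t) / W)"
  "vector_derivative (ssol K lam x0) (at t) = (u x0 * v' t - v x0 * u' t) / W"
proof -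
  have S: "sol_with_deriv K lam (\<lambda>t. (u x0 * v t - v x0 * u t) / W)
      (\<lambda>t. (u x0 * v' t - v x0 * u' t) / W)"
    using sol_with_deriv_lincomb[OF U V, of "- v x0 / W" "u x0 / W"]
    by (simp add: diff_divide_distrib add_divide_distrib mult.commute)
  have "u x0 * v' x0 - v x0 * u' x0 = W"
    by (simp add: W_def mult.commute)
  then show "ssol K lam x0 = (\<lambda>t. (u x0 * v t - v x0 * u t) / W)"
    using W_nz by (intro ssol_eqI[OF S]) simp_all
  then show "vector_derivative (ssol K lam x0) (at t) = (u x0 * v' t - v x0 * u' t) / W"
    using vector_derivative_sol_with_deriv[OF S] by simp
qed

end

lemma wronskian_nonzero_distinct_multipliers:
  assumes U: "sol_with_deriv K lam u u'" and V: "sol_with_deriv K lam v v'"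
    and u_shift: "\<And>t. u (t + pi) = \<mu> * u t" and v_shift: "\<And>t. v (t + pi) = \<mu>' * v t"
    and "\<mu> \<noteq> \<mu>'" and "u t1 \<noteq> 0" and "v t2 \<noteq> 0"
  shows "u x * v' x - u' x * v x \<noteq> 0"
proof
  assume W: "u x * v' x - u' x * v x = 0"
  have "u x \<noteq> 0 \<or> u' x \<noteq> 0"
    using sol_with_deriv_zero_data[OF U, of x t1] \<open>u t1 \<noteq> 0\<close> by blast
  then obtain c where c: "\<And>t. v t = c * u t"
    using wronskian_zero_imp_proportional[OF U V W] by blast
  have "\<mu>' * v t2 = \<mu> * v t2"
    using v_shift[of t2] c[of t2] c[of "t2 + pi"] u_shift[of t2] by auto
  with \<open>\<mu> \<noteq> \<mu>'\<close> \<open>v t2 \<noteq> 0\<close> show False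
    by simp
qed

lemma floquet_disc_diagonal_monodromy:
  assumes U: "sol_with_deriv K lam u u'" and V: "sol_with_deriv K lam v v'"
    and u_shift: "\<And>t. u (t + pi) = \<mu> * u t" "\<And>t. u' (t + pi) = \<mu> * u' t"
    and v_shift: "\<And>t. v (t + pi) = \<mu>' * v t" "\<And>t. v' (t + pi) = \<mu>' * v' t"
    and W_nz: "u 0 * v' 0 - u' 0 * v 0 \<noteq> 0"
  shows "floquet_disc K lam = (\<mu> + \<mu>') / 2"
proof -
  define W where "W = u 0 * v' 0 - u' 0 * v 0"
  then have "W \<noteq> 0"
    using W_nz by simp
  have "floquet_disc K lam = ((v' 0 * u pi - u' 0 * v pi) + (u 0 * v' pi - v 0 * u' pi)) / W / 2"
    unfolding floquet_disc_def csol_fundamental_pair(1)[OF U V W_def \<open>W \<noteq> 0\<close>]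
      ssol_fundamental_pair(2)[OF U V W_def \<open>W \<noteq> 0\<close>]
    by (simp add: add_divide_distrib)
  also have "\<dots> = (\<mu> + \<mu>') * W / W / 2"
    using u_shift[of 0] v_shift[of 0] by (simp add: W_def algebra_simps)
  finally show ?thesis
    using \<open>W \<noteq> 0\<close> by simp
qed

lemma dirichlet_neumann_jordan_monodromy:
  assumes U: "sol_with_deriv K lam u u'" and V: "sol_with_deriv K lam v v'"
    and u_shift: "\<And>t. u (t + pi) = \<epsilon> * u t" "\<And>t. u' (t + pi) = \<epsilon> * u' t"
    and v_shift: "\<And>t. v (t + pi) = \<epsilon> * (v t + c * u t)" "\<And>t. v' (t + pi) = \<epsilon> * (v' t + c * u' t)"
    and "\<epsilon> \<noteq> 0" "c \<noteq> 0" "u x \<noteq> 0" "u' x \<noteq> 0"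
  shows "ssol K lam x (x + pi) \<noteq> 0" "vector_derivative (csol K lam x) (at (x + pi)) \<noteq> 0"
proof -
  define W where "W = u x * v' x - u' x * v x"
  have W_nz: "W \<noteq> 0"
  proof
    assume "W = 0"
    then obtain d where d: "\<And>t. v t = d * u t"
      using wronskian_zero_imp_proportional[OF U V] \<open>u x \<noteq> 0\<close> unfolding W_def by blast
    have "\<epsilon> * (d * u x + c * u x) = \<epsilon> * (d * u x)"
      using v_shift(1)[of x] d[of x] d[of "x + pi"] u_shift(1)[of x] by simp
    with assms(7-9) show False by simp
  qed
  have "ssol K lam x (x + pi) = \<epsilon> * c * (u x)\<^sup>2 / W"
    unfolding ssol_fundamental_pair[OF U V W_def W_nz] u_shift v_shift
    by (simp add: algebra_simps power2_eq_square)
  then show "ssol K lam x (x + pi) \<noteq> 0"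
    using assms(7-9) W_nz by simp
  have "vector_derivative (csol K lam x) (at (x + pi)) = - \<epsilon> * c * (u' x)\<^sup>2 / W"
    unfolding csol_fundamental_pair(2)[OF U V W_def W_nz] u_shift v_shift
    by (simp add: algebra_simps power2_eq_square)
  then show "vector_derivative (csol K lam x) (at (x + pi)) \<noteq> 0"
    using assms(7-10) W_nz by simp
qed

lemma sol_with_deriv_bloch_fun:
  assumes "entire_fps f" "frobenius_op K \<kappa> f = 0"
  shows "sol_with_deriv K (\<kappa>\<^sup>2) (bloch_fun \<kappa> f) (bloch_fun \<kappa> (bloch_deriv \<kappa> f))"
  unfolding sol_with_deriv_def
proof
  fix t
  have "bloch_fun \<kappa> (bloch_deriv \<kappa> (bloch_deriv \<kappa> f)) t = (pot K t - \<kappa>\<^sup>2) * bloch_fun \<kappa> f t"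
    using bloch_fun_bloch_deriv_twice[OF assms(1), of \<kappa> t K] assms(2) by (simp add: bloch_fun_def)
  then show "(bloch_fun \<kappa> f has_vector_derivative bloch_fun \<kappa> (bloch_deriv \<kappa> f) t) (at t) \<and>
      (bloch_fun \<kappa> (bloch_deriv \<kappa> f) has_vector_derivative (pot K t - \<kappa>\<^sup>2) * bloch_fun \<kappa> f t) (at t)"
    using has_vector_derivative_bloch_fun assms(1) entire_bloch_deriv by metis
qed

lemma sol_with_deriv_resonant:
  fixes u u' w w' :: "real \<Rightarrow> complex" and A :: complex
  assumes U: "sol_with_deriv K lam u u'"
    and w: "\<And>t. (w has_vector_derivative w' t) (at t)"
    and w': "\<And>t. (w' has_vector_derivative (pot K t - lam) * w t - 2 * A * u' t) (at t)"
  shows "sol_with_deriv K lam (\<lambda>t. A * t * u t + w t) (\<lambda>t. A * (t * u' t + u t) + w' t)"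
  unfolding sol_with_deriv_def
proof
  fix t
  have u: "(u has_vector_derivative u' t) (at t)" "(u' has_vector_derivative (pot K t - lam) * u t) (at t)"
    using U unfolding sol_with_deriv_def by auto
  have id: "((\<lambda>t. complex_of_real t) has_vector_derivative 1) (at t)"
    using has_vector_derivative_of_real[OF DERIV_ident] by simp
  have "((\<lambda>t. A * (t * u t) + w t) has_vector_derivative A * (t * u' t + 1 * u t) + w' t) (at t)"
    by (intro has_vector_derivative_add has_vector_derivative_mult_right
        has_vector_derivative_mult[OF id u(1)] w)
  moreover have "((\<lambda>t. A * (t * u' t + u t) + w' t) has_vector_derivative
      A * (t * ((pot K t - lam) * u t) + 1 * u' t + u' t) + ((pot K t - lam) * w t - 2 * A * u' t)) (at t)"
    by (intro has_vector_derivative_add has_vector_derivative_mult_right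
        has_vector_derivative_mult[OF id u(2)] u(1) w')
  ultimately show "((\<lambda>t. A * t * u t + w t) has_vector_derivative A * (t * u' t + u t) + w' t) (at t) \<and>
      ((\<lambda>t. A * (t * u' t + u t) + w' t) has_vector_derivative (pot K t - lam) * (A * t * u t + w t)) (at t)"
    by (simp add: algebra_simps)
qed

section \<open>Bessel series\<close>

lemma entire_fps_ratio_bound:
  assumes "eventually (\<lambda>n. norm (fps_nth f (Suc n)) \<le> B / real (Suc n) * norm (fps_nth f n)) sequentially"
  shows "entire_fps f"
proof (rule entire_fpsI)
  fix z :: complex
  obtain N0 where N0: "\<And>n. n \<ge> N0 \<Longrightarrow> norm (fps_nth f (Suc n)) \<le> B / real (Suc n) * norm (fps_nth f n)"
    using assms unfolding eventually_sequentially by blast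
  show "summable (\<lambda>n. fps_nth f n * z ^ n)"
  proof (rule summable_ratio_test[where c = "1/2" and N = "max N0 (nat \<lceil>2 * B * norm z\<rceil>)"])
    fix n assume n: "max N0 (nat \<lceil>2 * B * norm z\<rceil>) \<le> n"
    have small: "B * norm z / real (Suc n) \<le> 1 / 2"
      using n by (simp add: field_simps)
    have "norm (fps_nth f (Suc n) * z ^ Suc n) = norm (fps_nth f (Suc n)) * (norm z * norm (z ^ n))"
      by (simp add: norm_mult norm_power)
    also have "\<dots> \<le> B / real (Suc n) * norm (fps_nth f n) * (norm z * norm (z ^ n))"
      using N0 n by (intro mult_right_mono) auto
    also have "\<dots> = B * norm z / real (Suc n) * norm (fps_nth f n * z ^ n)"
      by (simp add: norm_mult)
    also have "\<dots> \<le> 1 / 2 * norm (fps_nth f n * z ^ n)"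
      using small by (intro mult_right_mono) auto
    finally show "norm (fps_nth f (Suc n) * z ^ Suc n) \<le> 1 / 2 * norm (fps_nth f n * z ^ n)" .
  qed simp
qed

fun bessel_coeff :: "real \<Rightarrow> complex \<Rightarrow> nat \<Rightarrow> complex" where
  "bessel_coeff K \<nu> 0 = 1"
| "bessel_coeff K \<nu> (Suc n) = - K * bessel_coeff K \<nu> n / (4 * of_nat (Suc n) * (of_nat (Suc n) + \<nu>))"

text \<open>\<open>eval_fps (bessel_fps K \<nu>) z = \<Gamma>(\<nu>+1) (x/2)^(-\<nu>) J\<^sub>\<nu>(x)\<close> with \<open>x\<^sup>2 = K z\<close>.\<close>

definition bessel_fps :: "real \<Rightarrow> complex \<Rightarrow> complex fps" where
  "bessel_fps K \<nu> = Abs_fps (bessel_coeff K \<nu>)"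

lemma fps_nth_bessel_fps_0 [simp]: "fps_nth (bessel_fps K \<nu>) 0 = 1"
  by (simp add: bessel_fps_def)

lemma bessel_coeff_recurrence:
  assumes "of_nat (Suc n) + \<nu> \<noteq> 0"
  shows "4 * of_nat (Suc n) * (of_nat (Suc n) + \<nu>) * bessel_coeff K \<nu> (Suc n) = - K * bessel_coeff K \<nu> n"
proof -
  have denom: "4 * of_nat (Suc n) * (of_nat (Suc n) + \<nu>) \<noteq> 0"
    using assms by (simp del: of_nat_Suc)
  show ?thesis
    by (simp only: bessel_coeff.simps times_divide_eq_right nonzero_mult_div_cancel_left[OF denom])
qed

lemma entire_bessel_fps: "entire_fps (bessel_fps K \<nu>)"
proof (rule entire_fps_ratio_bound[where B = "\<bar>K\<bar>"])
  show "eventually (\<lambda>n. norm (fps_nth (bessel_fps K \<nu>) (Suc n))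
      \<le> \<bar>K\<bar> / real (Suc n) * norm (fps_nth (bessel_fps K \<nu>) n)) sequentially"
    unfolding eventually_sequentially
  proof (intro exI allI impI)
    fix n assume n: "nat \<lceil>norm \<nu>\<rceil> \<le> n"
    have "norm (of_nat (Suc n) :: complex) - norm \<nu> \<le> norm (of_nat (Suc n) + \<nu>)"
      by (rule norm_diff_ineq)
    then have "real (Suc n) - norm \<nu> \<le> norm (of_nat (Suc n) + \<nu>)"
      by (simp only: norm_of_nat)
    then have one: "1 \<le> norm (of_nat (Suc n) + \<nu>)"
      using n by linarith
    have "norm (bessel_coeff K \<nu> (Suc n)) =
        \<bar>K\<bar> / (4 * real (Suc n) * norm (of_nat (Suc n) + \<nu>)) * norm (bessel_coeff K \<nu> n)"
      by (simp only: bessel_coeff.simps norm_mult norm_divide norm_minus_cancel norm_of_real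
          norm_of_nat norm_numeral)
        (simp add: divide_inverse ac_simps)
    also have "\<dots> \<le> \<bar>K\<bar> / real (Suc n) * norm (bessel_coeff K \<nu> n)"
    proof (intro mult_right_mono divide_left_mono)
      have "real (Suc n) \<le> 4 * real (Suc n) * 1"
        by simp
      also have "\<dots> \<le> 4 * real (Suc n) * norm (of_nat (Suc n) + \<nu>)"
        by (rule mult_left_mono[OF one]) simp
      finally show "real (Suc n) \<le> 4 * real (Suc n) * norm (of_nat (Suc n) + \<nu>)" .
      then show "0 < 4 * real (Suc n) * norm (of_nat (Suc n) + \<nu>) * real (Suc n)"
        by (intro mult_pos_pos) auto
    qed auto
    finally show "norm (fps_nth (bessel_fps K \<nu>) (Suc n))
        \<le> \<bar>K\<bar> / real (Suc n) * norm (fps_nth (bessel_fps K \<nu>) n)"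
      by (simp add: bessel_fps_def)
  qed
qed

lemma frobenius_op_bessel_fps:
  assumes "\<And>n. of_nat (Suc n) + \<nu> \<noteq> 0"
  shows "frobenius_op K \<nu> (bessel_fps K \<nu>) = 0"
proof (rule fps_ext)
  fix n
  show "fps_nth (frobenius_op K \<nu> (bessel_fps K \<nu>)) n = fps_nth 0 n"
    using bessel_coeff_recurrence[OF assms, of "n - 1" K]
    by (cases n) (simp_all add: frobenius_op_nth bessel_fps_def)
qed

lemma bessel_fps_ode:
  "fps_X * fps_deriv (fps_deriv (bessel_fps K (of_nat m)))
     + fps_const (of_nat m + 1) * fps_deriv (bessel_fps K (of_nat m))
     + fps_const (of_real K / 4) * bessel_fps K (of_nat m) = 0"
    (is "?lhs = 0")
proof (rule fps_ext)
  fix n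
  define a where "a = bessel_coeff K (of_nat m)"
  have "of_nat (Suc n) + of_nat m \<noteq> (0 :: complex)"
    by (metis add_is_0 nat.distinct(1) of_nat_add of_nat_eq_0_iff)
  from bessel_coeff_recurrence[OF this, of K]
  have "4 * of_nat (Suc n) * (of_nat (Suc n) + of_nat m) * a (Suc n) + K * a n = 0"
    by (simp add: a_def)
  moreover have "fps_nth ?lhs n = (4 * of_nat (Suc n) * (of_nat (Suc n) + of_nat m) * a (Suc n) + K * a n) / 4"
    by (cases n) (simp_all add: a_def bessel_fps_def algebra_simps del: bessel_coeff.simps)
  ultimately show "fps_nth ?lhs n = fps_nth 0 n"
    by simp
qed

lemma bloch_fun_not_identically_zero:
  assumes "entire_fps f" "fps_nth f 0 \<noteq> 0"
  shows "\<exists>t. bloch_fun \<kappa> f t \<noteq> 0"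
proof (rule ccontr)
  assume "\<not> (\<exists>t. bloch_fun \<kappa> f t \<noteq> 0)"
  then have zero: "eval_fps f (exp (2 * \<i> * t)) = 0" for t :: real
    by (auto simp: bloch_fun_def)
  have holo: "eval_fps f holomorphic_on A" for A
    using assms(1) by (auto intro!: holomorphic_on_eval_fps simp: entire_fps_def)
  have frontier: "norm (eval_fps f z) \<le> 0" if "z \<in> frontier (cball 0 1)" for z
  proof -
    have "norm z = 1"
      using that by simp
    then have "z = exp (\<i> * of_real (Arg z))"
      using Arg_eq[of z] by (cases "z = 0") auto
    also have "\<dots> = exp (2 * \<i> * of_real (Arg z / 2))"
      by simp
    finally show ?thesis
      using zero by (metis norm_zero order_refl)
  qed
  have "norm (eval_fps f 0) \<le> 0"
    by (rule maximum_modulus_frontier[where S = "cball 0 1",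
          OF holo holomorphic_on_imp_continuous_on[OF holo] _ frontier]) simp_all
  then show False
    using assms(2) by (simp add: eval_fps_at_0)
qed

section \<open>The periodic eigenvalues are squares\<close>

lemma exp_i_pi_eq_exp_neg_imp_Ints:
  assumes "exp (\<i> * \<nu> * pi) = exp (- \<i> * \<nu> * pi)"
  shows "\<nu> \<in> \<int>"
proof -
  obtain n :: int where "\<i> * \<nu> * pi = - \<i> * \<nu> * pi + of_int (2 * n) * pi * \<i>"
    using assms exp_eq by blast
  then have "\<nu> = of_int n"
    by (simp add: algebra_simps)
  then show ?thesis
    by simp
qed

lemma half_sum_square_eq_1_imp_eq:
  fixes \<mu> \<mu>' :: complex
  assumes "\<mu> * \<mu>' = 1" and "((\<mu> + \<mu>') / 2)\<^sup>2 = 1"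
  shows "\<mu> = \<mu>'"
proof -
  have "(\<mu> - \<mu>')\<^sup>2 = ((\<mu> + \<mu>') / 2)\<^sup>2 * 4 - 4 * (\<mu> * \<mu>')"
    by (simp add: power2_eq_square field_simps)
  then show ?thesis
    using assms by simp
qed

lemma periodic_ev_imp_square:
  assumes "periodic_ev K lam"
  shows "\<exists>m::nat. lam = (of_nat m)\<^sup>2"
proof (rule ccontr)
  assume not_square: "\<nexists>m::nat. lam = (of_nat m)\<^sup>2"
  define \<nu> where "\<nu> = csqrt lam"
  have not_int: "\<nu> \<notin> \<int>"
  proof
    assume "\<nu> \<in> \<int>"
    then obtain k where "\<nu> = of_int k"
      by (elim Ints_cases)
    then have "lam = (of_nat (nat \<bar>k\<bar>))\<^sup>2"
      unfolding \<nu>_def by (metis of_int_of_nat_eq of_int_power power2_abs power2_csqrt int_nat_eq abs_ge_zero)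
    with not_square show False
      by blast
  qed
  have nondeg: "of_nat (Suc n) + \<nu> \<noteq> 0" "of_nat (Suc n) + - \<nu> \<noteq> 0" for n
    using not_int by (auto simp: add_eq_0_iff)
  define u u' v v' where "u = bloch_fun \<nu> (bessel_fps K \<nu>)"
    and "u' = bloch_fun \<nu> (bloch_deriv \<nu> (bessel_fps K \<nu>))"
    and "v = bloch_fun (- \<nu>) (bessel_fps K (- \<nu>))"
    and "v' = bloch_fun (- \<nu>) (bloch_deriv (- \<nu>) (bessel_fps K (- \<nu>)))"
  have U: "sol_with_deriv K lam u u'" and V: "sol_with_deriv K lam v v'"
    using sol_with_deriv_bloch_fun[OF entire_bessel_fps frobenius_op_bessel_fps[OF nondeg(1)]]
      sol_with_deriv_bloch_fun[OF entire_bessel_fps frobenius_op_bessel_fps[OF nondeg(2)]]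
    by (simp_all add: u_def u'_def v_def v'_def \<nu>_def)
  define \<mu> \<mu>' where "\<mu> = exp (\<i> * \<nu> * pi)" and "\<mu>' = exp (- \<i> * \<nu> * pi)"
  have u_shift: "u (t + pi) = \<mu> * u t" "u' (t + pi) = \<mu> * u' t"
    and v_shift: "v (t + pi) = \<mu>' * v t" "v' (t + pi) = \<mu>' * v' t" for t
    by (simp_all add: u_def u'_def v_def v'_def \<mu>_def \<mu>'_def bloch_fun_shift_pi)
  have \<mu>_neq: "\<mu> \<noteq> \<mu>'"
    using exp_i_pi_eq_exp_neg_imp_Ints not_int by (auto simp: \<mu>_def \<mu>'_def)
  obtain t1 t2 where "u t1 \<noteq> 0" "v t2 \<noteq> 0"
    using bloch_fun_not_identically_zero[OF entire_bessel_fps, of K \<nu> \<nu>]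
      bloch_fun_not_identically_zero[OF entire_bessel_fps, of K "- \<nu>" "- \<nu>"]
    unfolding u_def v_def by auto
  then have W_nz: "u 0 * v' 0 - u' 0 * v 0 \<noteq> 0"
    using wronskian_nonzero_distinct_multipliers[OF U V u_shift(1) v_shift(1) \<mu>_neq] by blast
  have "((\<mu> + \<mu>') / 2)\<^sup>2 = 1"
    using assms floquet_disc_diagonal_monodromy[OF U V u_shift v_shift W_nz]
    by (simp add: periodic_ev_def)
  moreover have "\<mu> * \<mu>' = 1"
    by (simp add: \<mu>_def \<mu>'_def flip: exp_add)
  ultimately show False
    using \<mu>_neq half_sum_square_eq_1_imp_eq by blast
qed

section \<open>Lommel's identity and zeros of Bessel functions\<close>

lemma has_vector_derivative_along_ray:
  fixes g g' :: "complex \<Rightarrow> complex" and w :: complex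
  assumes "\<And>z. (g has_field_derivative g' z) (at z)"
  shows "((\<lambda>r::real. g (w * r)) has_vector_derivative w * g' (w * r)) (at r)"
proof -
  have "((\<lambda>r::real. complex_of_real r) has_vector_derivative 1) (at r)"
    using has_vector_derivative_of_real[OF DERIV_ident] by simp
  from has_vector_derivative_mult_right[OF this, of w]
  have "((\<lambda>r::real. w * of_real r) has_vector_derivative w) (at r)"
    by simp
  from field_vector_diff_chain_at[OF this assms] show ?thesis
    by (simp add: o_def)
qed

lemma has_vector_derivative_lommel_term:
  fixes F F1 F2 :: "complex \<Rightarrow> complex" and K :: real and w :: complex
  assumes dF: "\<And>z. (F has_field_derivative F1 z) (at z)"
    and dF1: "\<And>z. (F1 has_field_derivative F2 z) (at z)"
    and ode: "\<And>z. z * F2 z + (of_nat m + 1) * F1 z + K / 4 * F z = 0"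
  shows "((\<lambda>r. of_real (r ^ Suc m) * (w * F1 (w * r)) * cnj (F (w * r))) has_vector_derivative
      - (K * w / 4) * of_real (r ^ m * (norm (F (w * r)))\<^sup>2)
      + of_real (r ^ Suc m * (norm (w * F1 (w * r)))\<^sup>2)) (at r)"
proof -
  define y y1 where "y r = F (w * r)" and "y1 r = w * F1 (w * r)" for r :: real
  have dy: "(y has_vector_derivative y1 r) (at r)"
    unfolding y_def[abs_def] y1_def using has_vector_derivative_along_ray[OF dF] .
  have dy1: "(y1 has_vector_derivative w * (w * F2 (w * r))) (at r)"
    unfolding y1_def[abs_def]
    by (intro has_vector_derivative_mult_right has_vector_derivative_along_ray dF1)
  have dpow: "((\<lambda>r. complex_of_real (r ^ Suc m)) has_vector_derivative of_real (real (Suc m) * r ^ m)) (at r)"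
    using DERIV_pow[of "Suc m" r] by (intro has_vector_derivative_of_real) simp
  have D: "((\<lambda>r. of_real (r ^ Suc m) * y1 r * cnj (y r)) has_vector_derivative
      of_real (r ^ Suc m) * y1 r * cnj (y1 r)
      + (of_real (r ^ Suc m) * (w * (w * F2 (w * r))) + of_real (real (Suc m) * r ^ m) * y1 r) * cnj (y r)) (at r)"
    by (intro has_vector_derivative_mult has_vector_derivative_cnj dpow dy dy1)
  have "of_real (r ^ Suc m) * (w * (w * F2 (w * r))) + of_real (real (Suc m) * r ^ m) * y1 r
      + (K * w / 4) * of_real (r ^ m) * y r
      = w * of_real (r ^ m) * (w * r * F2 (w * r) + (of_nat m + 1) * F1 (w * r) + K / 4 * F (w * r))"
    unfolding y_def y1_def by (simp add: algebra_simps)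
  then have "of_real (r ^ Suc m) * (w * (w * F2 (w * r))) + of_real (real (Suc m) * r ^ m) * y1 r
      = - (K * w / 4) * of_real (r ^ m) * y r"
    using ode[of "w * r"] by (simp add: eq_neg_iff_add_eq_0)
  moreover have "of_real (r ^ Suc m) * y1 r * cnj (y1 r) + (- (K * w / 4) * of_real (r ^ m) * y r) * cnj (y r)
      = - (K * w / 4) * of_real (r ^ m * (norm (y r))\<^sup>2) + of_real (r ^ Suc m * (norm (y1 r))\<^sup>2)"
    unfolding of_real_mult complex_norm_square by (simp add: algebra_simps)
  ultimately show ?thesis
    using D unfolding y_def y1_def by simp
qed

lemma lommel_identity:
  fixes F F1 F2 :: "complex \<Rightarrow> complex" and K :: real and w :: complex
  assumes dF: "\<And>z. (F has_field_derivative F1 z) (at z)"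
    and dF1: "\<And>z. (F1 has_field_derivative F2 z) (at z)"
    and ode: "\<And>z. z * F2 z + (of_nat m + 1) * F1 z + K / 4 * F z = 0"
  shows "w * F1 w * cnj (F w) =
    - (K * w / 4) * of_real (integral {0..1} (\<lambda>r. r ^ m * (norm (F (w * r)))\<^sup>2))
    + of_real (integral {0..1} (\<lambda>r. r ^ Suc m * (norm (w * F1 (w * r)))\<^sup>2))"
proof -
  define p q where "p r = r ^ m * (norm (F (w * r)))\<^sup>2"
    and "q r = r ^ Suc m * (norm (w * F1 (w * r)))\<^sup>2" for r :: real
  define E where "E r = of_real (r ^ Suc m) * (w * F1 (w * r)) * cnj (F (w * r))" for r :: real
  have "((\<lambda>r. - (K * w / 4) * of_real (p r) + of_real (q r)) has_integral E 1 - E 0) {0..1}"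
    using has_vector_derivative_lommel_term[OF dF dF1 ode, of w] unfolding p_def q_def E_def[abs_def]
    by (intro fundamental_theorem_of_calculus) (auto intro: has_vector_derivative_at_within)
  moreover have "isCont (\<lambda>r. F (w * of_real r)) r" "isCont (\<lambda>r. F1 (w * of_real r)) r" for r
    by (intro isCont_o2[OF _ DERIV_isCont[OF dF]] isCont_o2[OF _ DERIV_isCont[OF dF1]] continuous_intros)+
  then have "continuous_on {0..1} p" "continuous_on {0..1} q"
    unfolding p_def q_def by (auto intro!: continuous_at_imp_continuous_on continuous_intros)
  then have "((\<lambda>r. - (K * w / 4) * of_real (p r) + of_real (q r)) has_integral
      - (K * w / 4) * integral {0..1} p + integral {0..1} q) {0..1}"
    by (intro has_integral_add has_integral_mult_right has_integral_of_real integrable_integral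
        integrable_continuous_real)
  ultimately have "E 1 - E 0 = - (K * w / 4) * integral {0..1} p + integral {0..1} q"
    by (rule has_integral_unique)
  then show ?thesis
    unfolding p_def q_def by (simp add: E_def)
qed

lemma integral_weighted_norm_along_ray_pos:
  fixes F :: "complex \<Rightarrow> complex"
  assumes cont: "\<And>z. isCont F z" and "F 0 \<noteq> 0"
  shows "0 < integral {0..1} (\<lambda>r. r ^ m * (norm (F (w * of_real r)))\<^sup>2)"
proof -
  define p where "p r = r ^ m * (norm (F (w * of_real r)))\<^sup>2" for r :: real
  have "isCont (\<lambda>r. F (w * of_real r)) r" for r
    by (rule isCont_o2[OF _ cont]) (intro continuous_intros)
  then have "continuous_on {0..1} p"
    unfolding p_def by (intro continuous_at_imp_continuous_on ballI continuous_intros) auto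
  then have int: "(p has_integral integral {0..1} p) {0..1}"
    by (intro integrable_integral integrable_continuous_real)
  have "integral {0..1} p \<noteq> 0"
  proof
    assume "integral {0..1} p = 0"
    then have p_zero: "p r = 0" if "r \<in> {0..1}" for r
      using has_integral_0_cbox_imp_0[of 0 1 p r] int \<open>continuous_on {0..1} p\<close> that
      by (simp add: p_def)
    have "F (w * of_real (inverse (real (Suc n)))) = 0" for n
      using p_zero[of "inverse (real (Suc n))"] by (simp add: p_def field_simps)
    moreover have "(\<lambda>n. F (w * of_real (inverse (real (Suc n))))) \<longlonglongrightarrow> F (w * of_real 0)"
      by (intro isCont_tendsto_compose[OF cont] tendsto_intros LIMSEQ_inverse_real_of_nat)
    ultimately have "(\<lambda>n. 0) \<longlonglongrightarrow> F 0"
      by simp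
    with \<open>F 0 \<noteq> 0\<close> show False
      by (simp add: LIMSEQ_const_iff)
  qed
  moreover have "0 \<le> integral {0..1} p"
    using int by (rule has_integral_nonneg) (simp add: p_def)
  ultimately show ?thesis
    unfolding p_def by simp
qed

lemma lommel_boundary_term_not_nonpos:
  fixes F F1 F2 :: "complex \<Rightarrow> complex" and K R :: real and w :: complex
  assumes dF: "\<And>z. (F has_field_derivative F1 z) (at z)"
    and dF1: "\<And>z. (F1 has_field_derivative F2 z) (at z)"
    and ode: "\<And>z. z * F2 z + (of_nat m + 1) * F1 z + K / 4 * F z = 0"
    and "F 0 \<noteq> 0" "K > 0" "norm w = 1" "w \<noteq> 1" "0 \<le> R"
  shows "w * F1 w * cnj (F w) \<noteq> - of_real R"
proof
  assume boundary: "w * F1 w * cnj (F w) = - of_real R"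
  define P Q :: real
    where "P = integral {0..1} (\<lambda>r. r ^ m * (norm (F (w * of_real r)))\<^sup>2)"
      and "Q = integral {0..1} (\<lambda>r. r ^ Suc m * (norm (w * F1 (w * of_real r)))\<^sup>2)"
  have "0 < P"
    unfolding P_def using \<open>F 0 \<noteq> 0\<close> by (intro integral_weighted_norm_along_ray_pos DERIV_isCont[OF dF])
  have "isCont (\<lambda>r. F1 (w * of_real r)) r" for r
    by (rule isCont_o2[OF _ DERIV_isCont[OF dF1]]) (intro continuous_intros)
  then have "(\<lambda>r. r ^ Suc m * (norm (w * F1 (w * of_real r)))\<^sup>2) integrable_on {0..1}"
    by (intro integrable_continuous_real continuous_at_imp_continuous_on ballI continuous_intros) auto
  then have "0 \<le> Q"
    unfolding Q_def by (rule integral_nonneg) auto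
  have "of_real (K * P / 4) * w = of_real Q - w * F1 w * cnj (F w)"
    using lommel_identity[OF dF dF1 ode, of w] by (simp add: P_def Q_def algebra_simps)
  also have "\<dots> = of_real (Q + R)"
    using boundary by simp
  finally have w_real: "w = of_real (4 * (Q + R) / (K * P))"
    using \<open>K > 0\<close> \<open>0 < P\<close> by (simp add: field_simps)
  have "0 \<le> 4 * (Q + R) / (K * P)"
    using \<open>K > 0\<close> \<open>0 < P\<close> \<open>0 \<le> Q\<close> \<open>0 \<le> R\<close> by simp
  then have "norm w = 4 * (Q + R) / (K * P)"
    unfolding w_real norm_of_real by (rule abs_of_nonneg)
  then have "4 * (Q + R) / (K * P) = 1"
    using \<open>norm w = 1\<close> by linarith
  with w_real \<open>w \<noteq> 1\<close> show False
    by (metis of_real_1)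
qed

lemma bessel_fps_nonzero_on_circle:
  fixes K :: real and w :: complex and m :: nat
  defines "F \<equiv> eval_fps (bessel_fps K (of_nat m))"
    and "F' \<equiv> eval_fps (fps_deriv (bessel_fps K (of_nat m)))"
  assumes "K > 0" and "norm w = 1" and "w \<noteq> 1"
  shows "F w \<noteq> 0" and "of_nat m * F w + 2 * w * F' w \<noteq> 0"
proof -
  define a where "a = bessel_fps K (of_nat m)"
  define F'' where "F'' = eval_fps (fps_deriv (fps_deriv a))"
  have ent: "entire_fps a"
    by (simp add: a_def entire_bessel_fps)
  have dF: "(F has_field_derivative F' z) (at z)" and dF': "(F' has_field_derivative F'' z) (at z)" for z
    unfolding F_def F'_def F''_def a_def[symmetric]
    by (intro has_field_derivative_eval_fps entire_fps_in_radius ent entire_fps_deriv)+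
  have "z * F'' z + (of_nat m + 1) * F' z + K / 4 * F z = eval_fps 0 z" for z
    unfolding bessel_fps_ode[of K m, symmetric] F_def F'_def F''_def a_def
    using entire_bessel_fps[of K "of_nat m"] by (simp add: eval_fps_entire_simps)
  then have ode: "z * F'' z + (of_nat m + 1) * F' z + K / 4 * F z = 0" for z
    by simp
  have "F 0 \<noteq> 0"
    by (simp add: F_def eval_fps_at_0)
  note not_nonpos = lommel_boundary_term_not_nonpos[OF dF dF' ode this assms(3-5)]
  show "F w \<noteq> 0"
    using not_nonpos[of 0] by auto
  show "of_nat m * F w + 2 * w * F' w \<noteq> 0"
  proof
    assume "of_nat m * F w + 2 * w * F' w = 0"
    then have "w * F' w = - (of_nat m / 2) * F w"
      by (simp add: field_simps eq_neg_iff_add_eq_0)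
    then have "w * F' w * cnj (F w) = - (of_nat m / 2) * (F w * cnj (F w))"
      by simp
    also have "F w * cnj (F w) = of_real ((norm (F w))\<^sup>2)"
      by (rule complex_norm_square[symmetric])
    finally have "w * F' w * cnj (F w) = - of_real (real m / 2 * (norm (F w))\<^sup>2)"
      by simp
    then show False
      using not_nonpos[of "real m / 2 * (norm (F w))\<^sup>2"] by simp
  qed
qed

section \<open>The resonant second solution\<close>

text \<open>
  For \<open>\<kappa> = m\<close> the exponents \<open>\<plusminus>m\<close> differ by an integer and the recurrence for \<open>-m\<close> breaks down
  at \<open>n = m\<close>.  The logarithmic term of Bessel's \<open>Y\<^sub>m\<close> becomes the secular term \<open>A t u(t)\<close>, since
  \<open>log(exp(2it)) = 2it\<close>: below \<open>m\<close> the coefficients solve the recurrence, \<open>A\<close> is forced at \<open>n = m\<close>, and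
  beyond \<open>m\<close> they are the Bessel coefficients weighted by harmonic sums.
\<close>

fun resonant_head :: "real \<Rightarrow> nat \<Rightarrow> nat \<Rightarrow> complex" where
  "resonant_head K m 0 = 1"
| "resonant_head K m (Suc k) =
     - K * resonant_head K m k / (4 * of_nat (Suc k) * (of_nat (Suc k) - of_nat m))"

definition resonance_const :: "real \<Rightarrow> nat \<Rightarrow> complex" where
  "resonance_const K m = (if m = 0 then 1 else K * resonant_head K m (m - 1) / (2 * \<i> * of_nat m))"

definition harmonic_weight :: "complex \<Rightarrow> nat \<Rightarrow> nat \<Rightarrow> complex" where
  "harmonic_weight A m j = A * \<i> / 2 * of_real (\<Sum>l = 1..j. 1 / real l + 1 / real (l + m))"

definition resonant_fps :: "real \<Rightarrow> nat \<Rightarrow> complex fps" where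
  "resonant_fps K m = Abs_fps (\<lambda>n. if n < m then resonant_head K m n
     else bessel_coeff K (of_nat m) (n - m) * harmonic_weight (resonance_const K m) m (n - m))"

lemma resonant_head_recurrence:
  assumes "Suc k \<noteq> m"
  shows "4 * of_nat (Suc k) * (of_nat (Suc k) - of_nat m) * resonant_head K m (Suc k)
    = - K * resonant_head K m k"
proof -
  have denom: "4 * of_nat (Suc k) * (of_nat (Suc k) - of_nat m) \<noteq> (0 :: complex)"
    using assms by (simp del: of_nat_Suc)
  show ?thesis
    by (simp only: resonant_head.simps times_divide_eq_right nonzero_mult_div_cancel_left[OF denom])
qed

lemma resonant_head_nonzero: "K \<noteq> 0 \<Longrightarrow> k < m \<Longrightarrow> resonant_head K m k \<noteq> 0"
  by (induction k) (simp_all del: of_nat_Suc)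

lemma resonance_const_nonzero: "K \<noteq> 0 \<Longrightarrow> resonance_const K m \<noteq> 0"
  by (simp add: resonance_const_def resonant_head_nonzero)

lemma harmonic_weight_Suc:
  "harmonic_weight A m (Suc j) =
     harmonic_weight A m j + A * \<i> / 2 * (1 / of_nat (Suc j) + 1 / of_nat (Suc j + m))"
  by (simp add: harmonic_weight_def algebra_simps)

lemma norm_harmonic_weight_le: "norm (harmonic_weight A m j) \<le> norm A * real j"
proof -
  have "1 / real l + 1 / real (l + m) \<le> 2" if "l \<in> {1..j}" for l
  proof -
    have "1 / real l \<le> 1" "1 / real (l + m) \<le> 1"
      using that by (simp_all add: field_simps)
    then show ?thesis
      by linarith
  qed
  then have "(\<Sum>l = 1..j. 1 / real l + 1 / real (l + m)) \<le> (\<Sum>l = 1..j. 2)"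
    by (rule sum_mono)
  moreover have "0 \<le> (\<Sum>l = 1..j. 1 / real l + 1 / real (l + m))"
    by (intro sum_nonneg) simp
  ultimately have "\<bar>\<Sum>l = 1..j. 1 / real l + 1 / real (l + m)\<bar> \<le> 2 * real j"
    by simp
  then have "norm A / 2 * \<bar>\<Sum>l = 1..j. 1 / real l + 1 / real (l + m)\<bar> \<le> norm A / 2 * (2 * real j)"
    by (rule mult_left_mono) simp
  then show ?thesis
    by (simp only: harmonic_weight_def norm_mult norm_divide norm_of_real norm_ii norm_numeral)
qed

lemma entire_resonant_fps: "entire_fps (resonant_fps K m)"
proof (rule entire_fpsI)
  fix z :: complex
  define a where "a = bessel_coeff K (of_nat m)"
  define A where "A = resonance_const K m"
  have ent: "entire_fps (fps_XD (bessel_fps K (of_nat m)))"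
    by (simp add: entire_bessel_fps)
  have "summable (\<lambda>n. norm (of_nat n * a n * z ^ n))"
    using norm_summable_fps[OF entire_fps_in_radius[OF ent], of z] by (simp add: a_def bessel_fps_def)
  then have "summable (\<lambda>n. norm A * norm z ^ m * norm (of_nat n * a n * z ^ n))"
    by (intro summable_mult)
  then have "summable (\<lambda>n. fps_nth (resonant_fps K m) (n + m) * z ^ (n + m))"
  proof (rule summable_comparison_test[rotated], intro exI allI impI)
    fix n :: nat
    have "norm (fps_nth (resonant_fps K m) (n + m) * z ^ (n + m))
        = norm (a n) * norm (harmonic_weight A m n) * norm z ^ n * norm z ^ m"
      by (simp add: resonant_fps_def a_def A_def norm_mult norm_power power_add)
    also have "\<dots> \<le> norm (a n) * (norm A * real n) * norm z ^ n * norm z ^ m"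
      by (intro mult_right_mono mult_left_mono norm_harmonic_weight_le) auto
    finally show "norm (fps_nth (resonant_fps K m) (n + m) * z ^ (n + m))
        \<le> norm A * norm z ^ m * norm (of_nat n * a n * z ^ n)"
      by (simp add: norm_mult norm_power mult_ac)
  qed
  then show "summable (\<lambda>n. fps_nth (resonant_fps K m) n * z ^ n)"
    by (rule summable_iff_shift[THEN iffD1])
qed

lemma resonant_fps_recurrence_beyond:
  fixes K :: real and m j :: nat and h a :: "nat \<Rightarrow> complex" and A :: complex
  defines "h \<equiv> fps_nth (resonant_fps K m)" and "a \<equiv> bessel_coeff K (of_nat m)"
    and "A \<equiv> resonance_const K m"
  shows "4 * of_nat (Suc (m + j)) * of_nat (Suc j) * h (Suc (m + j)) + K * h (m + j)
    = 2 * A * \<i> * (of_nat (Suc j) + (of_nat (Suc j) + of_nat m)) * a (Suc j)"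
proof -
  define s t :: complex where "s = of_nat (Suc j)" and "t = of_nat (Suc j) + of_nat m"
  have "s \<noteq> 0" "t \<noteq> 0"
    unfolding s_def t_def by (simp_all only: of_nat_add[symmetric] of_nat_eq_0_iff)
  have rec: "K * a j = - (4 * s * t * a (Suc j))"
    using bessel_coeff_recurrence[of j "of_nat m" K] \<open>t \<noteq> 0\<close> by (simp add: a_def s_def t_def)
  have "4 * of_nat (Suc (m + j)) * of_nat (Suc j) * h (Suc (m + j)) + K * h (m + j)
      = 4 * t * s * a (Suc j) * harmonic_weight A m (Suc j) + (K * a j) * harmonic_weight A m j"
    by (simp add: h_def resonant_fps_def a_def A_def s_def t_def mult.assoc)
  also have "\<dots> = 4 * s * t * a (Suc j) * (harmonic_weight A m (Suc j) - harmonic_weight A m j)"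
    unfolding rec by (simp add: algebra_simps)
  also have "harmonic_weight A m (Suc j) - harmonic_weight A m j = A * \<i> / 2 * (1 / s + 1 / t)"
    by (simp add: harmonic_weight_Suc s_def t_def)
  also have "4 * s * t * a (Suc j) * (A * \<i> / 2 * (1 / s + 1 / t)) = 2 * A * \<i> * (s + t) * a (Suc j)"
    using \<open>s \<noteq> 0\<close> \<open>t \<noteq> 0\<close> by (simp add: field_simps)
  finally show ?thesis
    by (simp add: s_def t_def)
qed

lemma frobenius_op_resonant_fps:
  "frobenius_op K (- of_nat m) (resonant_fps K m)
     = fps_const (2 * resonance_const K m) * (fps_X ^ m * bloch_deriv (of_nat m) (bessel_fps K (of_nat m)))"
proof (rule fps_ext)
  fix n
  define a h A where "a = bessel_coeff K (of_nat m)" and "h = fps_nth (resonant_fps K m)"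
    and "A = resonance_const K m"
  have lhs: "fps_nth (frobenius_op K (- of_nat m) (resonant_fps K m)) n
      = 4 * of_nat n * (of_nat n - of_nat m) * h n + (if n = 0 then 0 else K * h (n - 1))"
    by (simp add: frobenius_op_nth h_def)
  have rhs: "fps_nth (fps_const (2 * A) * (fps_X ^ m * bloch_deriv (of_nat m) (bessel_fps K (of_nat m)))) n
      = 2 * A * (if n < m then 0 else 2 * \<i> * ((of_nat m / 2 + of_nat (n - m)) * a (n - m)))"
    by (simp add: fps_X_power_mult_nth bloch_deriv_def bessel_fps_def a_def)
  consider "n < m" | "n = m" | j where "n = Suc (m + j)"
    by (metis less_imp_Suc_add nat_neq_iff)
  then have "4 * of_nat n * (of_nat n - of_nat m) * h n + (if n = 0 then 0 else K * h (n - 1))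
      = 2 * A * (if n < m then 0 else 2 * \<i> * ((of_nat m / 2 + of_nat (n - m)) * a (n - m)))"
  proof cases
    case 1
    then show ?thesis
      using resonant_head_recurrence[of "n - 1" m K]
      by (cases n) (simp_all add: h_def resonant_fps_def)
  next
    case 2
    then show ?thesis
      by (cases m) (simp_all add: h_def a_def A_def resonant_fps_def resonance_const_def harmonic_weight_def
          del: of_nat_Suc)
  next
    case 3
    then show ?thesis
      using resonant_fps_recurrence_beyond[of m j K]
      by (simp add: h_def a_def A_def algebra_simps)
  qed
  then show "fps_nth (frobenius_op K (- of_nat m) (resonant_fps K m)) n
      = fps_nth (fps_const (2 * resonance_const K m) * (fps_X ^ m * bloch_deriv (of_nat m) (bessel_fps K (of_nat m)))) n"
    unfolding lhs A_def[symmetric] rhs .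
qed

section \<open>Dirichlet and Neumann values at the squares\<close>

lemma exp_pi_neg_of_nat: "exp (\<i> * (- of_nat m) * pi) = exp (\<i> * of_nat m * pi)"
proof -
  have "exp (of_nat m * (\<i> * pi)) = (-1) ^ m" "exp (of_nat m * - (\<i> * pi)) = (-1) ^ m"
    by (simp_all only: exp_of_nat_mult exp_minus exp_pi_i) simp_all
  then show ?thesis
    by (simp add: mult_ac)
qed

lemma exp_two_i_ne_1:
  assumes "0 < x" "x < pi"
  shows "exp (2 * \<i> * of_real x) \<noteq> 1"
proof
  assume "exp (2 * \<i> * of_real x) = 1"
  then obtain n :: int where "2 * x = of_int (2 * n) * pi"
    unfolding exp_eq_1 by auto
  then have "x = of_int n * pi"
    by simp
  with assms have "(0 :: real) < of_int n" "of_int n < (1 :: real)"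
    by (simp_all add: zero_less_mult_iff)
  then show False
    by simp
qed

lemma sol_with_deriv_bessel_resonant:
  fixes K :: real and m :: nat and u u' w w' :: "real \<Rightarrow> complex" and A :: complex
  defines "u \<equiv> bloch_fun (of_nat m) (bessel_fps K (of_nat m))"
    and "u' \<equiv> bloch_fun (of_nat m) (bloch_deriv (of_nat m) (bessel_fps K (of_nat m)))"
    and "w \<equiv> bloch_fun (- of_nat m) (resonant_fps K m)"
    and "w' \<equiv> bloch_fun (- of_nat m) (bloch_deriv (- of_nat m) (resonant_fps K m))"
    and "A \<equiv> resonance_const K m"
  shows "sol_with_deriv K ((of_nat m)\<^sup>2) u u'"
    and "sol_with_deriv K ((of_nat m)\<^sup>2) (\<lambda>t. A * t * u t + w t) (\<lambda>t. A * (t * u' t + u t) + w' t)"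
proof -
  have "of_nat (Suc n) + of_nat m \<noteq> (0 :: complex)" for n
    by (simp only: of_nat_add[symmetric] of_nat_eq_0_iff)
  then show U: "sol_with_deriv K ((of_nat m)\<^sup>2) u u'"
    unfolding u_def u'_def by (intro sol_with_deriv_bloch_fun entire_bessel_fps frobenius_op_bessel_fps)
  have h: "entire_fps (resonant_fps K m)"
    by (rule entire_resonant_fps)
  have "bloch_fun (- of_nat m) (frobenius_op K (- of_nat m) (resonant_fps K m)) t = 2 * A * u' t" for t
    unfolding frobenius_op_resonant_fps
    by (simp add: bloch_fun_const_mult bloch_fun_X_power entire_bessel_fps u'_def A_def)
  then have w': "(w' has_vector_derivative (pot K t - (of_nat m)\<^sup>2) * w t - 2 * A * u' t) (at t)" for t
    using has_vector_derivative_bloch_fun[of "bloch_deriv (- of_nat m) (resonant_fps K m)" "- of_nat m" t]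
      bloch_fun_bloch_deriv_twice[OF h, of "- of_nat m" t K] h
    by (simp add: w_def w'_def)
  have w: "(w has_vector_derivative w' t) (at t)" for t
    unfolding w_def w'_def by (rule has_vector_derivative_bloch_fun[OF h])
  show "sol_with_deriv K ((of_nat m)\<^sup>2) (\<lambda>t. A * t * u t + w t) (\<lambda>t. A * (t * u' t + u t) + w' t)"
    by (rule sol_with_deriv_resonant[OF U w w'])
qed

lemma dirichlet_neumann_at_square_nonzero:
  assumes "K > 0" and "0 < x" and "x < pi"
  shows "ssol K ((of_nat m)\<^sup>2) x (x + pi) \<noteq> 0"
    and "vector_derivative (csol K ((of_nat m)\<^sup>2) x) (at (x + pi)) \<noteq> 0"
proof -
  define k :: complex where "k = of_nat m"
  define a h A where "a = bessel_fps K k" and "h = resonant_fps K m" and "A = resonance_const K m"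
  define u u' where "u = bloch_fun k a" and "u' = bloch_fun k (bloch_deriv k a)"
  define v v' where "v t = A * t * u t + bloch_fun (- k) h t"
    and "v' t = A * (t * u' t + u t) + bloch_fun (- k) (bloch_deriv (- k) h) t" for t :: real
  have U: "sol_with_deriv K (k\<^sup>2) u u'" and V: "sol_with_deriv K (k\<^sup>2) v v'"
    using sol_with_deriv_bessel_resonant[of K m]
    unfolding u_def u'_def v_def[abs_def] v'_def[abs_def] k_def a_def h_def A_def by simp_all
  define \<epsilon> where "\<epsilon> = exp (\<i> * k * pi)"
  have u_shift: "u (t + pi) = \<epsilon> * u t" "u' (t + pi) = \<epsilon> * u' t" for t
    by (simp_all add: u_def u'_def \<epsilon>_def bloch_fun_shift_pi)
  have v_shift: "v (t + pi) = \<epsilon> * (v t + A * pi * u t)" "v' (t + pi) = \<epsilon> * (v' t + A * pi * u' t)" for t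
    using u_shift[of t] exp_pi_neg_of_nat[of m] bloch_fun_shift_pi[of "- k" h t]
      bloch_fun_shift_pi[of "- k" "bloch_deriv (- k) h" t]
    by (simp_all add: v_def v'_def \<epsilon>_def k_def algebra_simps)
  define w where "w = exp (2 * \<i> * of_real x)"
  have w: "norm w = 1" "w \<noteq> 1"
    using exp_two_i_ne_1[OF assms(2,3)] by (simp_all add: w_def)
  have "u x \<noteq> 0"
    using bessel_fps_nonzero_on_circle(1)[OF assms(1) w] by (simp add: u_def bloch_fun_def a_def k_def w_def)
  moreover have "u' x = \<i> * exp (\<i> * k * x) * (of_nat m * eval_fps a w + 2 * w * eval_fps (fps_deriv a) w)"
    using entire_bessel_fps[of K k]
    by (simp add: u'_def bloch_fun_def a_def k_def w_def bloch_deriv_def eval_fps_entire_simps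
        eval_fps_XDp algebra_simps)
  then have "u' x \<noteq> 0"
    using bessel_fps_nonzero_on_circle(2)[OF assms(1) w] by (simp add: a_def k_def)
  moreover have "\<epsilon> \<noteq> 0" "A * pi \<noteq> 0"
    using assms(1) by (simp_all add: \<epsilon>_def A_def resonance_const_nonzero)
  ultimately show "ssol K ((of_nat m)\<^sup>2) x (x + pi) \<noteq> 0"
    and "vector_derivative (csol K ((of_nat m)\<^sup>2) x) (at (x + pi)) \<noteq> 0"
    using dirichlet_neumann_jordan_monodromy[OF U V u_shift v_shift] by (simp_all add: k_def)
qed

theorem theorem6p7:
  fixes K x :: real
  assumes "K > 0" and "0 < x" and "x < pi"
  shows "(\<forall>mu E. dirichlet_ev K x mu \<and> periodic_ev K E \<longrightarrow> mu \<noteq> E) \<and>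
         (\<forall>nu E. neumann_ev K x nu \<and> periodic_ev K E \<longrightarrow> nu \<noteq> E)"
  using periodic_ev_imp_square dirichlet_neumann_at_square_nonzero[OF assms]
  unfolding dirichlet_ev_def neumann_ev_def by metis

end
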